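(* Suppose $F$ satisfies Assumption A1, $F\in MDA(\Lambda)$, Assumption A3, and $x_F=\infty$; let $u=\bar F/f$. For a threshold $a$ set $\beta=\bar F(a)$, $\eta=f(a)$, $\nu=-f'(a)$, and let $z^*(a,b)$ be the optimal value of $$\sup_g\int_b^\infty g(x)dx\ \text{ s.t. }\int_a^\infty g=\beta,\ g(a)=g(a+)=\eta,\ g'_+(a)\ge-\nu,\ g\text{ convex and }\ge0\text{ on }[a,\infty).$$ Fix $x\ge0$ and let $b=a+xu(a)$. Then $$\lim_{a\to\infty}\frac{z^*(a,b)}{\bar F(b)}=\begin{cases}\frac12e^x&\text{if }x\ge1,\\ \left(1-x+\frac12x^2\right)e^x&\text{if }x<1.\end{cases}$$
   Context: $X$ is a continuous random variable with distribution function $F$, density $f$, $\bar F=1-F$, right endpoint $x_F=\sup\{x:F(x)<1\}$. $\Lambda(x)=\exp\{-e^{-x}\}$. $F\in MDA(\Lambda)$ means there exist $c_n>0$, $d_n$ with $c_n^{-1}(M_n-d_n)$ converging in distribution to $\Lambda$, $M_n$ the maximum of $n$ i.i.d. copies of $X$. Assumption A1: there exists $z<x_F$ such that on $(z,x_F)$, $F$ is twice differentiable and $f$ is positive, decreasing and convex. Assumption A3: $\lim_{x\uparrow x_F}\bar F(x)f'(x)/f(x)^2=-1$. $g(a+)$ is the right limit and $g'_+$ the right derivative. *)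

theory Defs
  imports "HOL-Analysis.Analysis"
begin

definition Gumbel :: "real \<Rightarrow> real" where
  "Gumbel x = exp (- exp (- x))"

text \<open>Max-domain of attraction of the Gumbel law: there are normalising sequences
  c n > 0 and d n such that (M_n - d_n)/c_n converges in distribution to Gumbel.
  Since P(M_n \<le> y) = F(y)^n and Gumbel is continuous everywhere, this is pointwise
  convergence of F(c_n x + d_n)^n to Gumbel x for every real x.\<close>
definition MDA_Gumbel :: "(real \<Rightarrow> real) \<Rightarrow> bool" where
  "MDA_Gumbel F \<longleftrightarrow> (\<exists>c d :: nat \<Rightarrow> real. (\<forall>n. c n > 0) \<and>
      (\<forall>x. (\<lambda>n. F (c n * x + d n) ^ n) \<longlonglongrightarrow> Gumbel x))"

definition feasible :: "real \<Rightarrow> real \<Rightarrow> real \<Rightarrow> real \<Rightarrow> (real \<Rightarrow> real) set" where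
  "feasible a beta eta nu = {g.
      (g has_integral beta) {a..} \<and>
      g a = eta \<and> (g \<longlongrightarrow> eta) (at_right a) \<and>
      (\<exists>D. (g has_real_derivative D) (at_right a) \<and> D \<ge> - nu) \<and>
      convex_on {a..} g \<and> (\<forall>y\<ge>a. g y \<ge> 0)}"

definition zstar :: "(real \<Rightarrow> real) \<Rightarrow> (real \<Rightarrow> real) \<Rightarrow> (real \<Rightarrow> real) \<Rightarrow> real \<Rightarrow> real \<Rightarrow> ereal" where
  "zstar F f f' a b =
     (SUP g \<in> feasible a (1 - F a) (f a) (- f' a). ereal (integral {b..} g))"

end

theory Submission
  imports Defs
begin

text \<open>A feasible \<open>g\<close> is convex with \<open>g a = \<eta>\<close> and right slope at least \<open>-\<nu>\<close>, so it lies
  above the ramp \<open>max 0 (\<eta> - \<nu> (y - a))\<close>; hence its mass on \<open>[a, b]\<close> is at least the ramp's,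
  which bounds \<open>z*(a, b)\<close> from above. Conversely, once \<open>\<beta> \<nu> / \<eta>\<^sup>2 \<ge> 1/2\<close> the ramp's total
  mass \<open>\<eta>\<^sup>2 / (2 \<nu>)\<close> fits under \<open>\<beta>\<close>, and mixing it with a small weight of a flatter ramp
  carrying the remaining mass is feasible and nearly attains the bound. So \<open>z*(a, b)\<close> is
  \<open>\<beta> (1 - ramp_mass r x)\<close> up to \<open>o(\<beta>)\<close>, where \<open>r = \<beta> \<nu> / \<eta>\<^sup>2 \<rightarrow> 1\<close> by A3.
  For the denominator, A3 says exactly that \<open>u = (1 - F) / f\<close> satisfies \<open>u' \<rightarrow> 0\<close>, and
  \<open>(ln (1 - F))' = -1/u\<close>, so the mean value theorem gives
  \<open>(1 - F (a + x u a)) / (1 - F a) \<rightarrow> exp (-x)\<close>.\<close>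

definition ramp :: "real \<Rightarrow> real \<Rightarrow> real \<Rightarrow> real \<Rightarrow> real" where
  "ramp a eta nu y = max 0 (eta - nu * (y - a))"

text \<open>\<open>ramp_mass r x\<close> is the integral of \<open>ramp 0 1 r\<close> over \<open>[0, x]\<close>.\<close>
definition ramp_mass :: "real \<Rightarrow> real \<Rightarrow> real" where
  "ramp_mass r x = min x (1 / r) - r * (min x (1 / r))\<^sup>2 / 2"

lemma has_integral_ramp_interval:
  assumes "eta > 0" and "nu > 0" and "s \<ge> 0"
  shows "(ramp a eta nu has_integral
          eta * min s (eta / nu) - nu * (min s (eta / nu))\<^sup>2 / 2) {a..a + s}"
proof -
  define H where "H y = eta * min (y - a) (eta / nu) - nu * (min (y - a) (eta / nu))\<^sup>2 / 2" for y
  have "(ramp a eta nu has_integral H (a + s) - H a) {a..a + s}"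
  proof (rule fundamental_theorem_of_calculus_interior_strong[where S = "{a + eta / nu}"])
    show "continuous_on {a..a + s} H"
      unfolding H_def by (auto intro!: continuous_intros)
    fix y assume y: "y \<in> {a<..<a + s} - {a + eta / nu}"
    have "(H has_real_derivative ramp a eta nu y) (at y)"
    proof (cases "y - a < eta / nu")
      case True
      have "((\<lambda>y. eta * (y - a) - nu * (y - a)\<^sup>2 / 2) has_real_derivative eta - nu * (y - a)) (at y)"
        by (auto intro!: derivative_eq_intros)
      moreover have "ramp a eta nu y = eta - nu * (y - a)"
        using True \<open>nu > 0\<close> by (simp add: ramp_def field_simps)
      ultimately show ?thesis
        using True
        by (auto simp: H_def intro: has_field_derivative_transform_within_open[where S = "{..<a + eta / nu}"])
    next
      case False
      with y have far: "y - a > eta / nu" by auto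
      have "ramp a eta nu y = 0"
        using far \<open>nu > 0\<close> by (simp add: ramp_def field_simps)
      then show ?thesis
        using has_field_derivative_transform_within_open[OF DERIV_const, where a = y and S = "{a + eta / nu<..}" and g = H]
          far by (auto simp: H_def)
    qed
    then show "(H has_vector_derivative ramp a eta nu y) (at y)"
      by (simp add: has_real_derivative_iff_has_vector_derivative)
  qed (use assms in auto)
  moreover have "H a = 0"
    using assms by (simp add: H_def)
  moreover have "H (a + s) = eta * min s (eta / nu) - nu * (min s (eta / nu))\<^sup>2 / 2"
    by (simp add: H_def)
  ultimately show ?thesis
    by simp
qed

lemma has_integral_ramp_scaled:
  assumes "beta > 0" and "eta > 0" and "nu > 0" and "x \<ge> 0"
  shows "(ramp a eta nu has_integral beta * ramp_mass (beta * nu / eta\<^sup>2) x)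
           {a..a + x * (beta / eta)}"
proof -
  define u r where "u = beta / eta" and "r = beta * nu / eta\<^sup>2"
  have "eta / nu = u * (1 / r)"
    using assms by (simp add: u_def r_def field_simps power2_eq_square)
  then have m: "min (x * u) (eta / nu) = u * min x (1 / r)"
    using assms by (simp add: u_def min_mult_distrib_left mult.commute)
  have "eta * u = beta" and "nu * u\<^sup>2 = beta * r"
    using assms by (simp_all add: u_def r_def power2_eq_square field_simps)
  have "eta * min (x * u) (eta / nu) - nu * (min (x * u) (eta / nu))\<^sup>2 / 2
             = (eta * u) * min x (1 / r) - (nu * u\<^sup>2) * (min x (1 / r))\<^sup>2 / 2"
    unfolding m by (simp add: power_mult_distrib algebra_simps)
  also have "\<dots> = beta * ramp_mass r x"
    unfolding \<open>eta * u = beta\<close> \<open>nu * u\<^sup>2 = beta * r\<close> ramp_mass_def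
    by (simp add: algebra_simps)
  finally have "eta * min (x * u) (eta / nu) - nu * (min (x * u) (eta / nu))\<^sup>2 / 2
             = beta * ramp_mass r x" .
  moreover have "x * u \<ge> 0"
    using assms by (simp add: u_def)
  ultimately show ?thesis
    using has_integral_ramp_interval[OF \<open>eta > 0\<close> \<open>nu > 0\<close>, of "x * u" a]
    by (simp add: u_def r_def)
qed

lemma has_integral_ramp:
  assumes "eta > 0" and "nu > 0"
  shows "(ramp a eta nu has_integral eta\<^sup>2 / (2 * nu)) {a..}"
proof -
  let ?e = "a + eta / nu"
  have "(ramp a eta nu has_integral eta\<^sup>2 / (2 * nu)) {a..?e}"
    using has_integral_ramp_interval[OF assms, of "eta / nu" a] assms
    by (simp add: field_simps power2_eq_square)
  moreover have "(ramp a eta nu has_integral 0) {?e..}"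
    by (rule has_integral_eq[OF _ has_integral_0]) (use \<open>nu > 0\<close> in \<open>simp add: ramp_def field_simps\<close>)
  moreover have "negligible ({a..?e} \<inter> {?e..})"
    by (rule negligible_subset[OF negligible_sing[of ?e]]) auto
  ultimately have "(ramp a eta nu has_integral eta\<^sup>2 / (2 * nu) + 0) ({a..?e} \<union> {?e..})"
    by (rule has_integral_Un)
  moreover have "{a..?e} \<union> {?e..} = {a..}"
    using divide_pos_pos[OF assms] by auto
  ultimately show ?thesis
    by simp
qed

lemma convex_on_ramp: "convex_on A (ramp a eta nu)" if "convex A"
proof (rule convex_onI[OF _ that])
  fix t y z :: real assume t: "0 < t" "t < 1"
  have "eta - nu * ((1 - t) *\<^sub>R y + t *\<^sub>R z - a)
        = (1 - t) * (eta - nu * (y - a)) + t * (eta - nu * (z - a))"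
    by (simp add: algebra_simps)
  also have "\<dots> \<le> (1 - t) * ramp a eta nu y + t * ramp a eta nu z"
    using t by (intro add_mono mult_left_mono) (auto simp: ramp_def)
  finally show "ramp a eta nu ((1 - t) *\<^sub>R y + t *\<^sub>R z)
                \<le> (1 - t) * ramp a eta nu y + t * ramp a eta nu z"
    using t by (simp add: ramp_def)
qed

lemma isCont_ramp: "isCont (ramp a eta nu) y"
  unfolding ramp_def[abs_def] by (intro continuous_intros)

lemma ramp_has_real_derivative_start:
  assumes "eta > 0"
  shows "(ramp a eta nu has_real_derivative - nu) (at a)"
proof (rule has_field_derivative_transform_within[where d = "eta / (\<bar>nu\<bar> + 1)"])
  show "((\<lambda>y. eta - nu * (y - a)) has_real_derivative - nu) (at a)"
    by (auto intro!: derivative_eq_intros)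
  show "eta - nu * (y - a) = ramp a eta nu y" if "dist y a < eta / (\<bar>nu\<bar> + 1)" for y
  proof -
    have "\<bar>nu * (y - a)\<bar> \<le> (\<bar>nu\<bar> + 1) * \<bar>y - a\<bar>"
      by (simp add: abs_mult mult_right_mono)
    also have "\<dots> < eta"
      using that by (simp add: dist_real_def field_simps add_pos_nonneg)
    finally show ?thesis
      by (simp add: ramp_def)
  qed
qed (use assms in auto)

lemma convex_on_ge_right_tangent:
  fixes g :: "real \<Rightarrow> real"
  assumes cvx: "convex_on I g" and "a \<in> I" "y \<in> I" "a \<le> y"
    and D: "(g has_real_derivative D) (at_right a)"
  shows "g a + D * (y - a) \<le> g y"
proof (cases "y = a")
  case False
  with \<open>a \<le> y\<close> have "a < y" by simp
  have "((\<lambda>t. (g t - g a) / (t - a)) \<longlongrightarrow> D) (at_right a)"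
    using D by (simp add: has_field_derivative_iff)
  moreover have "\<forall>\<^sub>F t in at_right a. t < y"
    unfolding eventually_at_right_field using \<open>a < y\<close> by blast
  then have "\<forall>\<^sub>F t in at_right a. (g t - g a) / (t - a) \<le> (g y - g a) / (y - a)"
    using eventually_at_right_less[of a]
  proof eventually_elim
    case (elim t)
    then have "(g a - g t) / (a - t) \<le> (g a - g y) / (a - y)"
      using convex_on_slope_le(1)[OF cvx \<open>a \<in> I\<close> \<open>y \<in> I\<close>, of t] by simp
    then show ?case
      by (metis minus_diff_eq minus_divide_divide)
  qed
  ultimately have "D \<le> (g y - g a) / (y - a)"
    by (rule tendsto_upperbound) simp
  with \<open>a < y\<close> show ?thesis
    by (simp add: field_simps)
qed simp

lemma has_integral_atLeast_diff:
  fixes g :: "real \<Rightarrow> real"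
  assumes g: "(g has_integral beta) {a..}" and "a \<le> b"
  shows "(g has_integral beta - integral {a..b} g) {b..}"
proof -
  have "g integrable_on {a..b}"
    using integrable_on_subinterval[of g "{a..}" a b] g by auto
  then have "((\<lambda>y. if y \<in> {a..b} then g y else 0) has_integral integral {a..b} g) UNIV"
    by (simp only: has_integral_restrict_UNIV has_integral_integral)
  moreover have "((\<lambda>y. if y \<in> {a..} then g y else 0) has_integral beta) UNIV"
    using g by (simp only: has_integral_restrict_UNIV)
  ultimately have "((\<lambda>y. (if y \<in> {a..} then g y else 0) - (if y \<in> {a..b} then g y else 0))
               has_integral beta - integral {a..b} g) UNIV"
    by (rule has_integral_diff[rotated])
  then have "((\<lambda>y. if y \<in> {b..} then g y else 0) has_integral beta - integral {a..b} g) UNIV"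
    by (rule has_integral_spike[OF negligible_sing[of b], rotated]) (use \<open>a \<le> b\<close> in auto)
  then show ?thesis
    by (simp only: has_integral_restrict_UNIV)
qed

lemma feasible_ge_ramp:
  assumes "g \<in> feasible a beta eta nu" and "y \<ge> a"
  shows "ramp a eta nu y \<le> g y"
proof -
  obtain D where "g a = eta" and D: "(g has_real_derivative D) (at_right a)" "D \<ge> - nu"
    and cvx: "convex_on {a..} g" and nonneg: "g y \<ge> 0"
    using assms unfolding feasible_def by auto
  have "eta - nu * (y - a) \<le> g a + D * (y - a)"
    using \<open>g a = eta\<close> mult_right_mono[OF D(2), of "y - a"] \<open>y \<ge> a\<close> by simp
  also have "\<dots> \<le> g y"
    using convex_on_ge_right_tangent[OF cvx _ _ \<open>y \<ge> a\<close> D(1)] \<open>y \<ge> a\<close> by simp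
  finally show ?thesis
    using nonneg by (simp add: ramp_def)
qed

lemma feasible_tail_integral_le:
  assumes g: "g \<in> feasible a beta eta nu"
    and "beta > 0" "eta > 0" "nu > 0" "x \<ge> 0"
  shows "integral {a + x * (beta / eta)..} g \<le> beta * (1 - ramp_mass (beta * nu / eta\<^sup>2) x)"
proof -
  define s where "s = x * (beta / eta)"
  have "s \<ge> 0"
    using assms by (simp add: s_def)
  have total: "(g has_integral beta) {a..}"
    using g by (simp add: feasible_def)
  have ramp: "(ramp a eta nu has_integral beta * ramp_mass (beta * nu / eta\<^sup>2) x) {a..a + s}"
    unfolding s_def using assms(2-5) by (rule has_integral_ramp_scaled)
  have "beta * ramp_mass (beta * nu / eta\<^sup>2) x \<le> integral {a..a + s} g"
    using integrable_on_subinterval[of g "{a..}" a "a + s"] total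
    by (intro has_integral_le[OF ramp integrable_integral] feasible_ge_ramp[OF g]) auto
  then show ?thesis
    using has_integral_atLeast_diff[OF total, of "a + s"] \<open>s \<ge> 0\<close>
    by (simp add: s_def integral_unique algebra_simps)
qed

lemma ramp_mixture_feasible:
  assumes "eta > 0" "0 < nu2" "nu2 \<le> nu" "0 \<le> c" "c \<le> 1"
    and mass: "(1 - c) * (eta\<^sup>2 / (2 * nu)) + c * (eta\<^sup>2 / (2 * nu2)) = beta"
  shows "(\<lambda>y. (1 - c) * ramp a eta nu y + c * ramp a eta nu2 y) \<in> feasible a beta eta nu"
proof -
  let ?g = "\<lambda>y. (1 - c) * ramp a eta nu y + c * ramp a eta nu2 y"
  have "nu > 0"
    using assms by linarith
  have "(?g has_integral beta) {a..}"
    unfolding mass[symmetric] using assms \<open>nu > 0\<close>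
    by (intro has_integral_add has_integral_mult_right[OF has_integral_ramp])
  moreover have "?g a = eta"
    using \<open>eta > 0\<close> by (simp add: ramp_def algebra_simps)
  moreover have "isCont ?g a"
    by (intro continuous_add continuous_mult continuous_const isCont_ramp)
  then have "(?g \<longlongrightarrow> eta) (at_right a)"
    using \<open>?g a = eta\<close> unfolding isCont_def by (auto intro: tendsto_mono[OF at_le])
  moreover have "(?g has_real_derivative (1 - c) * - nu + c * - nu2) (at_right a)"
    using has_field_derivative_at_within[OF DERIV_add[OF
        DERIV_cmult[OF ramp_has_real_derivative_start[OF \<open>eta > 0\<close>, of a nu], of "1 - c"]
        DERIV_cmult[OF ramp_has_real_derivative_start[OF \<open>eta > 0\<close>, of a nu2], of c]]] .
  moreover have "(1 - c) * - nu + c * - nu2 \<ge> - nu"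
    using assms by (simp add: algebra_simps mult_left_mono)
  moreover have "convex_on {a..} ?g"
    using assms by (intro convex_on_add convex_on_cmul convex_on_ramp) (auto simp: convex_real_interval)
  moreover have "?g y \<ge> 0" for y
    using assms by (simp add: ramp_def)
  ultimately show ?thesis
    unfolding feasible_def by blast
qed

lemma exists_ramp_mixture_slope:
  fixes eta nu beta c :: real
  assumes "eta > 0" "nu > 0" "eta\<^sup>2 / (2 * nu) \<le> beta" "0 < c"
  obtains nu2 where "0 < nu2" "nu2 \<le> nu"
    and "(1 - c) * (eta\<^sup>2 / (2 * nu)) + c * (eta\<^sup>2 / (2 * nu2)) = beta"
proof -
  define M where "M = eta\<^sup>2 / (2 * nu)"
  define nu2 where "nu2 = c * eta\<^sup>2 / (2 * (beta - (1 - c) * M))"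
  have "M > 0" "M \<le> beta"
    using assms by (simp_all add: M_def)
  then have rest: "c * M \<le> beta - (1 - c) * M"
    by (simp add: algebra_simps)
  then have gap: "0 < beta - (1 - c) * M"
    using mult_pos_pos[OF \<open>c > 0\<close> \<open>M > 0\<close>] by linarith
  then have "0 < nu2"
    using assms by (simp add: nu2_def)
  moreover have "nu2 \<le> c * eta\<^sup>2 / (2 * (c * M))"
    unfolding nu2_def using assms \<open>M > 0\<close> rest gap
    by (intro divide_left_mono mult_left_mono mult_pos_pos) auto
  moreover have "c * eta\<^sup>2 / (2 * (c * M)) = nu"
    using assms by (simp add: M_def field_simps)
  moreover have "(1 - c) * M + c * (eta\<^sup>2 / (2 * nu2)) = beta"
    using assms \<open>M > 0\<close> gap by (simp add: nu2_def field_simps)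
  ultimately show ?thesis
    using that unfolding M_def by auto
qed

lemma ramp_mixture_le:
  assumes "0 \<le> c" "c \<le> 1" "eta \<ge> 0" "nu2 \<ge> 0" "y \<ge> a"
  shows "(1 - c) * ramp a eta nu y + c * ramp a eta nu2 y \<le> ramp a eta nu y + c * eta"
proof -
  have "(1 - c) * ramp a eta nu y \<le> ramp a eta nu y"
    using assms mult_left_le_one_le[of "ramp a eta nu y" "1 - c"] by (simp add: ramp_def)
  moreover have "ramp a eta nu2 y \<le> eta"
    using assms by (simp add: ramp_def)
  ultimately show ?thesis
    using \<open>c \<ge> 0\<close> by (intro add_mono mult_left_mono) auto
qed

text \<open>The flat ramp is bounded by \<open>eta\<close>, so its weight \<open>c\<close> costs at most \<open>c * beta * x\<close>
  on \<open>[a, a + x * (beta / eta)]\<close>.\<close>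
lemma exists_feasible_tail_integral_ge:
  assumes "eta > 0" "nu > 0" "eta\<^sup>2 / (2 * nu) \<le> beta" "0 < c" "c \<le> 1" "x \<ge> 0"
  obtains g where "g \<in> feasible a beta eta nu"
    and "beta * (1 - ramp_mass (beta * nu / eta\<^sup>2) x - c * x) \<le> integral {a + x * (beta / eta)..} g"
proof -
  obtain nu2 where nu2: "0 < nu2" "nu2 \<le> nu"
    and mass: "(1 - c) * (eta\<^sup>2 / (2 * nu)) + c * (eta\<^sup>2 / (2 * nu2)) = beta"
    using exists_ramp_mixture_slope assms by blast
  define g where "g y = (1 - c) * ramp a eta nu y + c * ramp a eta nu2 y" for y
  define s where "s = x * (beta / eta)"
  have "0 < eta\<^sup>2 / (2 * nu)"
    using assms by simp
  then have "beta > 0"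
    using assms by linarith
  have feas: "g \<in> feasible a beta eta nu"
    unfolding g_def[abs_def] using assms nu2 mass by (intro ramp_mixture_feasible) auto
  then have total: "(g has_integral beta) {a..}"
    by (simp add: feasible_def)
  have "s \<ge> 0" "eta * s = beta * x"
    using assms \<open>beta > 0\<close> by (simp_all add: s_def)
  have "((\<lambda>y. ramp a eta nu y + c * eta) has_integral
          beta * ramp_mass (beta * nu / eta\<^sup>2) x + c * (beta * x)) {a..a + s}"
    using has_integral_add[OF has_integral_ramp_scaled[OF \<open>beta > 0\<close> \<open>eta > 0\<close> \<open>nu > 0\<close> \<open>x \<ge> 0\<close>, of a]
        has_integral_const_real[of "c * eta" a "a + x * (beta / eta)"]]
      \<open>s \<ge> 0\<close> \<open>eta * s = beta * x\<close>
    by (simp add: s_def algebra_simps)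
  moreover have "g y \<le> ramp a eta nu y + c * eta" if "y \<ge> a" for y
    unfolding g_def using assms nu2 that by (intro ramp_mixture_le) auto
  ultimately have "integral {a..a + s} g \<le> beta * ramp_mass (beta * nu / eta\<^sup>2) x + c * (beta * x)"
    using integrable_on_subinterval[of g "{a..}" a "a + s"] total
    by (intro has_integral_le[OF integrable_integral]) auto
  then have "beta * (1 - ramp_mass (beta * nu / eta\<^sup>2) x - c * x) \<le> integral {a + s..} g"
    using has_integral_atLeast_diff[OF total, of "a + s"] \<open>s \<ge> 0\<close>
    by (simp add: integral_unique algebra_simps)
  with feas show ?thesis
    by (intro that) (simp_all add: s_def)
qed

lemma SUP_feasible_tail_integral_bounds:
  fixes a beta eta nu c x :: real
  assumes "beta > 0" "eta > 0" "1 / 2 \<le> beta * nu / eta\<^sup>2" "0 < c" "c \<le> 1" "x \<ge> 0"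
  defines "Z \<equiv> SUP g \<in> feasible a beta eta nu. ereal (integral {a + x * (beta / eta)..} g)"
  shows "ereal (beta * (1 - ramp_mass (beta * nu / eta\<^sup>2) x - c * x)) \<le> Z"
    and "Z \<le> ereal (beta * (1 - ramp_mass (beta * nu / eta\<^sup>2) x))"
proof -
  have "0 < beta * nu / eta\<^sup>2"
    using assms(3) by linarith
  then have "nu > 0"
    using assms by (simp add: zero_less_divide_iff zero_less_mult_iff)
  have "eta\<^sup>2 / (2 * nu) \<le> beta"
    using assms \<open>nu > 0\<close> by (simp add: field_simps)
  then obtain g where "g \<in> feasible a beta eta nu"
    and "beta * (1 - ramp_mass (beta * nu / eta\<^sup>2) x - c * x) \<le> integral {a + x * (beta / eta)..} g"
    using exists_feasible_tail_integral_ge assms \<open>nu > 0\<close> by blast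
  then show "ereal (beta * (1 - ramp_mass (beta * nu / eta\<^sup>2) x - c * x)) \<le> Z"
    unfolding Z_def by (auto intro: SUP_upper2)
  show "Z \<le> ereal (beta * (1 - ramp_mass (beta * nu / eta\<^sup>2) x))"
    unfolding Z_def using feasible_tail_integral_le assms \<open>nu > 0\<close> by (auto intro: SUP_least)
qed

lemma shift_by_scale_estimate:
  fixes U U' W :: "real \<Rightarrow> real"
  assumes dU: "\<And>t. t \<ge> a \<Longrightarrow> (U has_real_derivative U' t) (at t)"
    and dW: "\<And>t. t \<ge> a \<Longrightarrow> (W has_real_derivative - 1 / U t) (at t)"
    and U'_bound: "\<And>t. t \<ge> a \<Longrightarrow> \<bar>U' t\<bar> \<le> d"
    and "U a > 0" "x > 0" "d * x \<le> 1 / 2"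
  shows "\<bar>W (a + x * U a) - W a + x\<bar> \<le> 2 * d * x\<^sup>2"
proof -
  define b where "b = a + x * U a"
  have "a < b"
    using assms by (simp add: b_def)
  have incr: "\<bar>U t - U a\<bar> \<le> d * x * U a" if "a \<le> t" "t \<le> b" for t
  proof -
    have "\<bar>U t - U a\<bar> \<le> d * \<bar>t - a\<bar>"
      using field_differentiable_bound[of "{a..}" U U' d t a] dU U'_bound that
      by (auto simp: convex_real_interval intro: has_field_derivative_at_within)
    also have "\<dots> \<le> d * (x * U a)"
      using that U'_bound[of a] by (intro mult_left_mono) (auto simp: b_def)
    finally show ?thesis
      by (simp add: mult.assoc)
  qed
  obtain \<xi> where \<xi>: "a < \<xi>" "\<xi> < b" and mvt: "W b - W a = (b - a) * (- 1 / U \<xi>)"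
    using MVT2[OF \<open>a < b\<close>, of W "\<lambda>t. - 1 / U t"] dW by force
  have "d * x * U a \<le> U a / 2"
    using mult_right_mono[OF \<open>d * x \<le> 1 / 2\<close>, of "U a"] \<open>U a > 0\<close> by simp
  then have "U \<xi> \<ge> U a / 2"
    using incr[of \<xi>] \<xi> by simp
  then have "U \<xi> > 0"
    using \<open>U a > 0\<close> by simp
  have "W b - W a + x = x * (U \<xi> - U a) / U \<xi>"
    using mvt \<open>U \<xi> > 0\<close> by (simp add: b_def field_simps)
  then have "\<bar>W b - W a + x\<bar> = x * \<bar>U \<xi> - U a\<bar> / U \<xi>"
    using \<open>x > 0\<close> \<open>U \<xi> > 0\<close> by (simp add: abs_mult)
  also have "\<dots> \<le> x * (d * x * U a) / (U a / 2)"
    using incr[of \<xi>] \<xi> \<open>U \<xi> \<ge> U a / 2\<close> \<open>U a > 0\<close> \<open>x > 0\<close>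
    by (intro frac_le mult_left_mono) auto
  also have "\<dots> = 2 * d * x\<^sup>2"
    using \<open>U a > 0\<close> by (simp add: field_simps power2_eq_square)
  finally show ?thesis
    by (simp add: b_def)
qed

lemma shift_by_scale_tendsto:
  fixes U U' W :: "real \<Rightarrow> real"
  assumes dU: "\<And>t. t > z \<Longrightarrow> (U has_real_derivative U' t) (at t)"
    and dW: "\<And>t. t > z \<Longrightarrow> (W has_real_derivative - 1 / U t) (at t)"
    and U_pos: "\<And>t. t > z \<Longrightarrow> U t > 0"
    and U'_lim: "(U' \<longlongrightarrow> 0) at_top" and "x \<ge> 0"
  shows "((\<lambda>a. W (a + x * U a) - W a) \<longlongrightarrow> - x) at_top"
proof (cases "x = 0")
  case False
  with \<open>x \<ge> 0\<close> have "x > 0" by simp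
  show ?thesis
    unfolding tendsto_iff
  proof (intro allI impI)
    fix e :: real assume "e > 0"
    define d where "d = min (1 / (2 * (x + 1))) (e / (4 * (x\<^sup>2 + 1)))"
    have "d > 0"
      using \<open>x > 0\<close> \<open>e > 0\<close> by (simp add: d_def add_nonneg_pos)
    have "0 < x\<^sup>2 + 1"
      by (simp add: add_nonneg_pos)
    then have "d * (2 * (x + 1)) \<le> 1" "d * (4 * (x\<^sup>2 + 1)) \<le> e"
      using pos_le_divide_eq[of "2 * (x + 1)" d 1] pos_le_divide_eq[of "4 * (x\<^sup>2 + 1)" d e] \<open>x > 0\<close>
      by (auto simp: d_def)
    moreover have "d * (2 * (x + 1)) = 2 * (d * x) + 2 * d"
      and "d * (4 * (x\<^sup>2 + 1)) = 4 * (d * x\<^sup>2) + 4 * d" and "2 * d * x\<^sup>2 = 2 * (d * x\<^sup>2)"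
      by (simp_all add: algebra_simps)
    moreover have "0 \<le> d * x\<^sup>2"
      using \<open>d > 0\<close> by simp
    ultimately have dx: "d * x \<le> 1 / 2" and dx2: "2 * d * x\<^sup>2 < e"
      using \<open>d > 0\<close> by linarith+
    obtain A where A: "\<And>t. t \<ge> A \<Longrightarrow> \<bar>U' t\<bar> < d"
      using U'_lim \<open>d > 0\<close> unfolding tendsto_iff eventually_at_top_linorder by (auto simp: dist_real_def)
    have "\<bar>W (a + x * U a) - W a + x\<bar> < e" if "a \<ge> max A (z + 1)" for a
    proof -
      have "\<bar>W (a + x * U a) - W a + x\<bar> \<le> 2 * d * x\<^sup>2"
        using that dx \<open>x > 0\<close> A U_pos[of a]
        by (intro shift_by_scale_estimate[where U' = U'] dU dW) (auto intro: less_imp_le)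
      with dx2 show ?thesis
        by linarith
    qed
    then show "\<forall>\<^sub>F a in at_top. dist (W (a + x * U a) - W a) (- x) < e"
      unfolding eventually_at_top_linorder dist_real_def by (auto intro!: exI[of _ "max A (z + 1)"])
  qed
qed simp

lemma tail_ratio_tendsto_exp:
  fixes F f f' :: "real \<Rightarrow> real"
  assumes der: "\<forall>t>z. (F has_real_derivative f t) (at t) \<and> (f has_real_derivative f' t) (at t) \<and> f t > 0"
    and A3: "((\<lambda>t. (1 - F t) * f' t / (f t)\<^sup>2) \<longlongrightarrow> -1) at_top"
    and F_lt_1: "\<And>t. F t < 1" and "x \<ge> 0"
  shows "((\<lambda>a. (1 - F (a + x * ((1 - F a) / f a))) / (1 - F a)) \<longlongrightarrow> exp (- x)) at_top"
proof -
  define U where "U t = (1 - F t) / f t" for t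
  define U' where "U' t = - 1 - (1 - F t) * f' t / (f t)\<^sup>2" for t
  define W where "W t = ln (1 - F t)" for t
  have "(U has_real_derivative U' t) (at t)" if "t > z" for t
    using der that unfolding U_def[abs_def] U'_def
    by (auto intro!: derivative_eq_intros simp: field_simps power2_eq_square)
  moreover have "(W has_real_derivative - 1 / U t) (at t)" if "t > z" for t
    using der that F_lt_1[of t] unfolding W_def[abs_def] U_def
    by (auto intro!: derivative_eq_intros)
  moreover have "U t > 0" if "t > z" for t
    using der that F_lt_1[of t] by (simp add: U_def)
  moreover have "(U' \<longlongrightarrow> 0) at_top"
    using tendsto_diff[OF tendsto_const A3, of "- 1"] by (simp add: U'_def[abs_def])
  ultimately have "((\<lambda>a. exp (W (a + x * U a) - W a)) \<longlongrightarrow> exp (- x)) at_top"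
    by (intro tendsto_exp shift_by_scale_tendsto[where U' = U'] \<open>x \<ge> 0\<close>)
  moreover have "exp (W (a + x * U a) - W a) = (1 - F (a + x * ((1 - F a) / f a))) / (1 - F a)" for a
    using F_lt_1 by (simp add: W_def U_def exp_diff)
  ultimately show ?thesis
    by simp
qed

lemma ereal_divide_tendsto_sandwich:
  fixes Z :: "'a \<Rightarrow> ereal" and s l h q :: "'a \<Rightarrow> real"
  assumes bounds: "\<forall>\<^sub>F a in F. ereal (s a * l a) \<le> Z a \<and> Z a \<le> ereal (s a * h a)"
    and pos: "\<forall>\<^sub>F a in F. s a > 0 \<and> q a > 0"
    and l: "(l \<longlongrightarrow> L) F" and h: "(h \<longlongrightarrow> L) F"
    and ratio: "((\<lambda>a. q a / s a) \<longlongrightarrow> R) F" and "R \<noteq> 0"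
  shows "((\<lambda>a. Z a / ereal (q a)) \<longlongrightarrow> ereal (L / R)) F"
proof (rule tendsto_sandwich[of "\<lambda>a. ereal (l a / (q a / s a))" _ _ "\<lambda>a. ereal (h a / (q a / s a))"])
  show "\<forall>\<^sub>F a in F. ereal (l a / (q a / s a)) \<le> Z a / ereal (q a)"
    using bounds pos
  proof eventually_elim
    case (elim a)
    then have "ereal (s a * l a) / ereal (q a) \<le> Z a / ereal (q a)"
      by (intro ereal_divide_right_mono) auto
    with elim show ?case
      by (simp add: field_simps)
  qed
  show "\<forall>\<^sub>F a in F. Z a / ereal (q a) \<le> ereal (h a / (q a / s a))"
    using bounds pos
  proof eventually_elim
    case (elim a)
    then have "Z a / ereal (q a) \<le> ereal (s a * h a) / ereal (q a)"
      by (intro ereal_divide_right_mono) auto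
    with elim show ?case
      by (simp add: field_simps)
  qed
qed (use tendsto_divide[OF l ratio] tendsto_divide[OF h ratio] \<open>R \<noteq> 0\<close> in \<open>auto intro: tendsto_ereal\<close>)

lemma eventually_zstar_bounds:
  fixes F f f' :: "real \<Rightarrow> real"
  assumes der: "\<forall>t>z. (F has_real_derivative f t) (at t) \<and> (f has_real_derivative f' t) (at t) \<and> f t > 0"
    and r_lim: "((\<lambda>a. (1 - F a) * - f' a / (f a)\<^sup>2) \<longlongrightarrow> 1) at_top"
    and F_lt_1: "\<And>t. F t < 1" and "x \<ge> 0"
  defines "r \<equiv> \<lambda>a. (1 - F a) * - f' a / (f a)\<^sup>2"
  shows "\<forall>\<^sub>F a in at_top.
           ereal ((1 - F a) * (1 - ramp_mass (r a) x - x / a)) \<le> zstar F f f' a (a + x * ((1 - F a) / f a)) \<and>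
           zstar F f f' a (a + x * ((1 - F a) / f a)) \<le> ereal ((1 - F a) * (1 - ramp_mass (r a) x))"
proof -
  have "\<forall>\<^sub>F a in at_top. 1 / 2 < r a"
    using r_lim unfolding r_def by (rule order_tendstoD) simp
  with eventually_gt_at_top[of z] eventually_ge_at_top[of 1] show ?thesis
  proof eventually_elim
    case (elim a)
    then have "f a > 0" "1 - F a > 0" "1 / 2 \<le> r a" "0 < 1 / a" "1 / a \<le> 1"
      using der F_lt_1[of a] by auto
    then show ?case
      using SUP_feasible_tail_integral_bounds[of "1 - F a" "f a" "- f' a" "1 / a" x a] \<open>x \<ge> 0\<close>
      unfolding zstar_def r_def by simp
  qed
qed

theorem theorem6:
  fixes F f f' :: "real \<Rightarrow> real" and x :: real
  assumes F_mono: "mono F"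
    and F_top: "(F \<longlongrightarrow> 1) at_top"
    and dens_nonneg: "\<And>t. f t \<ge> 0"
    and density: "\<And>t. (f has_integral F t) {..t}"
    and A1: "\<exists>z. (\<forall>t>z. (F has_real_derivative f t) (at t) \<and>
                         (f has_real_derivative f' t) (at t) \<and> f t > 0) \<and>
                (\<forall>s t. z < s \<and> s \<le> t \<longrightarrow> f t \<le> f s) \<and>
                convex_on {z<..} f"
    and MDA: "MDA_Gumbel F"
    and A3: "((\<lambda>t. (1 - F t) * f' t / (f t)^2) \<longlongrightarrow> -1) at_top"
    and xF: "\<And>t. F t < 1"
    and x_nonneg: "x \<ge> 0"
  shows "((\<lambda>a. zstar F f f' a (a + x * ((1 - F a) / f a))
                / ereal (1 - F (a + x * ((1 - F a) / f a))))
          \<longlongrightarrow> ereal (if x \<ge> 1 then exp x / 2 else (1 - x + x^2 / 2) * exp x)) at_top"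
proof -
  obtain z where der: "\<forall>t>z. (F has_real_derivative f t) (at t) \<and>
                         (f has_real_derivative f' t) (at t) \<and> f t > 0"
    using A1 by blast
  define r where "r a = (1 - F a) * - f' a / (f a)\<^sup>2" for a
  have r_lim: "(r \<longlongrightarrow> 1) at_top"
    using tendsto_minus[OF A3] by (simp add: r_def[abs_def])
  have G_lim: "((\<lambda>a. ramp_mass (r a) x) \<longlongrightarrow> ramp_mass 1 x) at_top"
    unfolding ramp_mass_def by (intro tendsto_intros r_lim) simp_all
  have "((\<lambda>a. zstar F f f' a (a + x * ((1 - F a) / f a)) / ereal (1 - F (a + x * ((1 - F a) / f a))))
          \<longlongrightarrow> ereal ((1 - ramp_mass 1 x) / exp (- x))) at_top"
  proof (rule ereal_divide_tendsto_sandwich)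
    show "\<forall>\<^sub>F a in at_top.
           ereal ((1 - F a) * (1 - ramp_mass (r a) x - x / a)) \<le> zstar F f f' a (a + x * ((1 - F a) / f a)) \<and>
           zstar F f f' a (a + x * ((1 - F a) / f a)) \<le> ereal ((1 - F a) * (1 - ramp_mass (r a) x))"
      using eventually_zstar_bounds[OF der _ xF x_nonneg] r_lim by (simp add: r_def[abs_def])
    show "((\<lambda>a. 1 - ramp_mass (r a) x - x / a) \<longlongrightarrow> 1 - ramp_mass 1 x) at_top"
      using tendsto_diff[OF tendsto_diff[OF tendsto_const G_lim]
          tendsto_divide_0[OF tendsto_const filterlim_at_top_imp_at_infinity[OF filterlim_ident]]]
      by simp
  qed (use xF tail_ratio_tendsto_exp[OF der A3 xF x_nonneg] in \<open>auto intro: tendsto_intros G_lim\<close>)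
  moreover have "(1 - ramp_mass 1 x) / exp (- x) = (if x \<ge> 1 then exp x / 2 else (1 - x + x^2 / 2) * exp x)"
    by (auto simp: ramp_mass_def exp_minus field_simps min_def power2_eq_square)
  ultimately show ?thesis
    by simp
qed

end
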